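(* Let $f=f(n)\ge0$ with $f\to\infty$ and let $\alpha>0$ be a constant. There exist constants $\zeta>0$ and $C>0$ such that, for all sufficiently large $n$ and every $f/n\le p\le1$, with probability at least $1-Ce^{-(pn)^2}$ the following holds in $\mathcal G(n,p)$: for every $s\le\zeta n$ and every set $S\subseteq[n]$ of size $s$, $|E[S]|\le\alpha pns$.
   Context: $\mathcal G(n,p)$ is the Erdős–Rényi random graph on $[n]$ with edge probability $p$; $E[S]$ is the set of edges with both ends in $S$. *)

theory Defs
  imports "HOL-Probability.Probability"
begin

definition all_edges :: "nat \<Rightarrow> nat set set" where
  "all_edges n = {e. \<exists>i j. 1 \<le> i \<and> i < j \<and> j \<le> n \<and> e = {i, j}}"

definition gnp :: "nat \<Rightarrow> real \<Rightarrow> nat set set pmf" where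
  "gnp n p = map_pmf (\<lambda>b. {e \<in> all_edges n. b e})
                (Pi_pmf (all_edges n) False (\<lambda>_. bernoulli_pmf p))"

definition edges_in :: "nat set set \<Rightarrow> nat set \<Rightarrow> nat set set" where
  "edges_in E S = {e \<in> E. e \<subseteq> S}"

end

theory Submission
  imports Defs
begin

text \<open>If some S with |S| = s \<le> \<zeta>n spans more than \<alpha>pns edges, then some set of
  m = \<lfloor>\<alpha>pns\<rfloor> + 1 potential edges inside S is present. A union bound over S and these edge
  sets bounds the probability by C(n,s) C(s^2,m) p^m \<le> (en/s)^s (es/(\<alpha>n))^m. Since \<alpha>pn \<ge> 2
  gives m \<ge> 2s, and s/n \<le> \<zeta> is small, this is at most q^m with q = exp (-2/\<alpha>^2). Finally
  m \<ge> \<alpha>pns and m \<le> s^2 force m \<ge> \<alpha>^2(pn)^2, so q^m \<le> exp (-(pn)^2) 2^(-s), and summing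
  over s gives the bound with C = 1.\<close>

lemma power_div_fact_le_exp:
  fixes x :: real
  assumes "0 \<le> x"
  shows "x ^ k / fact k \<le> exp x"
proof -
  have sums: "(\<lambda>n. x ^ n / fact n) sums exp x"
    using exp_converges[of x] by (simp add: divide_inverse_commute scaleR_conv_of_real)
  have "(\<Sum>n\<in>{k}. x ^ n / fact n) \<le> (\<Sum>n. x ^ n / fact n)"
    by (rule sum_le_suminf) (use sums assms in \<open>auto simp: sums_iff\<close>)
  with sums show ?thesis by (simp add: sums_iff)
qed

lemma binomial_le_exp_pow: "real (n choose k) \<le> (exp 1 * real n / real k) ^ k"
proof (cases "k = 0")
  case False
  have "real (n choose k) * fact k \<le> real n ^ k"
    using binomial_fact_pow[of n k] by (metis of_nat_fact of_nat_le_iff of_nat_mult of_nat_power)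
  then have "real (n choose k) \<le> real n ^ k / fact k"
    by (simp add: field_simps)
  also have "\<dots> = (real n / real k) ^ k * (real k ^ k / fact k)"
    using False by (simp add: power_divide)
  also have "\<dots> \<le> (real n / real k) ^ k * exp 1 ^ k"
    using power_div_fact_le_exp[of "real k" k] by (intro mult_left_mono) (auto simp flip: exp_of_nat_mult)
  also have "\<dots> = (exp 1 * real n / real k) ^ k"
    by (simp add: power_mult_distrib power_divide)
  finally show ?thesis .
qed simp

lemma binomial_mult_power_le:
  fixes p :: real
  assumes "0 \<le> p"
  shows "real (n choose k) * p ^ k \<le> (exp 1 * n * p / k) ^ k"
proof -
  have "real (n choose k) * p ^ k \<le> (exp 1 * n / k) ^ k * p ^ k"
    using binomial_le_exp_pow assms by (intro mult_right_mono) auto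
  also have "\<dots> = (exp 1 * n * p / k) ^ k"
    by (simp add: power_mult_distrib power_divide)
  finally show ?thesis .
qed

lemma power_tradeoff_le:
  fixes b x c \<alpha> :: real and s m :: nat
  assumes "1 \<le> b" "0 < x" "b * x \<le> c\<^sup>2" "0 \<le> c" "c \<le> 1" "0 \<le> \<alpha>" "2 * s \<le> m"
  shows "(b / x) ^ s * (b * x / \<alpha>) ^ m \<le> (b * c / \<alpha>) ^ m"
proof -
  have "(b / x) ^ s * (b * x / \<alpha>) ^ m = (b / \<alpha>) ^ m * (b ^ s * x ^ (m - s))"
  proof -
    have "x ^ m = x ^ s * x ^ (m - s)"
      using assms(7) by (simp flip: power_add)
    then show ?thesis
      using assms(2) by (simp add: power_mult_distrib power_divide field_simps)
  qed
  also have "\<dots> \<le> (b / \<alpha>) ^ m * c ^ m"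
  proof (rule mult_left_mono)
    have "b ^ s * x ^ (m - s) \<le> (b * x) ^ (m - s)"
      using assms by (auto simp: power_mult_distrib intro!: mult_right_mono power_increasing)
    also have "\<dots> \<le> (c\<^sup>2) ^ (m - s)"
      using assms by (intro power_mono) auto
    also have "\<dots> \<le> c ^ m"
      using assms by (auto simp flip: power_mult intro!: power_decreasing)
    finally show "b ^ s * x ^ (m - s) \<le> c ^ m" .
  qed (use assms in auto)
  also have "\<dots> = (b * c / \<alpha>) ^ m"
    by (simp add: power_mult_distrib power_divide)
  finally show ?thesis .
qed

lemma exp_neg_inverse_square_power_le:
  fixes \<alpha> K :: real and m s :: nat
  assumes "0 < \<alpha>" "\<alpha> \<le> K" "1 \<le> s" "\<alpha> * K * s \<le> m" "m \<le> s\<^sup>2"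
  shows "exp (- 2 / \<alpha>\<^sup>2) ^ m \<le> exp (- K\<^sup>2) * (1 / 2) ^ s"
proof -
  have "\<alpha> * K * s \<le> s * s"
    using assms(4,5) by (simp add: power2_eq_square flip: of_nat_mult of_nat_le_iff)
  then have "\<alpha> * K \<le> s"
    using assms(3) by (simp add: mult_le_cancel_right)
  then have "(\<alpha> * K) * (\<alpha> * K) \<le> (\<alpha> * K) * s"
    using assms(1,2) by (intro mult_left_mono) auto
  moreover have "\<alpha> * \<alpha> * s \<le> \<alpha> * K * s"
    using assms(1,2) by (intro mult_right_mono mult_left_mono) auto
  ultimately have "(\<alpha> * K) * (\<alpha> * K) + \<alpha> * \<alpha> * s \<le> 2 * m"
    using assms(4) by linarith
  then have "K\<^sup>2 + s \<le> 2 * m / \<alpha>\<^sup>2"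
    using assms(1) by (simp add: field_simps power2_eq_square)
  then have "exp (- 2 / \<alpha>\<^sup>2) ^ m \<le> exp (- K\<^sup>2) * exp (-1) ^ s"
    by (simp add: exp_add[symmetric] flip: exp_of_nat_mult)
  also have "\<dots> \<le> exp (- K\<^sup>2) * (1 / 2) ^ s"
  proof -
    have "2 \<le> exp (1::real)"
      using exp_ge_add_one_self[of 1] by simp
    then have "exp (-1::real) \<le> 1 / 2"
      by (simp add: exp_minus field_simps)
    then show ?thesis
      by (intro mult_left_mono power_mono) auto
  qed
  finally show ?thesis .
qed

text \<open>The left-hand side bounds the expected number of pairs (S, T) with |S| = s and T a set of
  m present potential edges inside S.\<close>
lemma binomial_dense_term_le:
  fixes n s m :: nat and \<alpha> c p :: real
  assumes "0 < \<alpha>" "\<alpha> \<le> p * n" "2 \<le> \<alpha> * p * n"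
    and "1 \<le> s" "exp 1 * s \<le> c\<^sup>2 * n" "\<alpha> * p * n * s \<le> m"
    and "0 < c" "c \<le> 1" "exp 1 * c \<le> \<alpha> * exp (- 2 / \<alpha>\<^sup>2)"
  shows "real (n choose s) * real (s\<^sup>2 choose m) * p ^ m \<le> exp (- (p * n)\<^sup>2) * (1 / 2) ^ s"
proof (cases "m \<le> s\<^sup>2")
  case False
  then show ?thesis
    by (simp add: binomial_eq_0)
next
  case True
  have "0 < p * n"
    using assms(1,2) by linarith
  then have p: "0 < p" and n: "0 < n"
    by (auto simp: zero_less_mult_iff)
  define x where "x = s / n"
  have x: "0 < x" "exp 1 * x \<le> c\<^sup>2"
    using assms(4,5) n by (auto simp: x_def field_simps)
  have "2 * real s \<le> \<alpha> * p * n * s"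
    using assms(3) by (intro mult_right_mono) auto
  then have "2 * s \<le> m"
    using assms(6) by linarith
  have choose_sets: "real (n choose s) \<le> (exp 1 / x) ^ s"
    using binomial_le_exp_pow[of n s] by (simp add: x_def)
  have ratio: "exp 1 * real (s\<^sup>2) * p / m \<le> exp 1 * x / \<alpha>"
  proof -
    have "0 < \<alpha> * p * n * s"
      using assms(1,4) p n by simp
    then have "exp 1 * real (s\<^sup>2) * p / m \<le> exp 1 * real (s\<^sup>2) * p / (\<alpha> * p * n * s)"
      using assms(6) p by (intro divide_left_mono) auto
    also have "\<dots> = exp 1 * x / \<alpha>"
      using p n assms(4) by (simp add: x_def power2_eq_square)
    finally show ?thesis .
  qed
  have "real (s\<^sup>2 choose m) * p ^ m \<le> (exp 1 * real (s\<^sup>2) * p / m) ^ m"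
    using binomial_mult_power_le[of p "s\<^sup>2" m] p by simp
  also have "\<dots> \<le> (exp 1 * x / \<alpha>) ^ m"
    using ratio p by (intro power_mono) auto
  finally have choose_edges: "real (s\<^sup>2 choose m) * p ^ m \<le> (exp 1 * x / \<alpha>) ^ m" .
  have "real (n choose s) * real (s\<^sup>2 choose m) * p ^ m \<le> (exp 1 / x) ^ s * (exp 1 * x / \<alpha>) ^ m"
    unfolding mult.assoc using choose_sets choose_edges x p by (intro mult_mono) auto
  also have "\<dots> \<le> (exp 1 * c / \<alpha>) ^ m"
    using x assms(1,7,8) \<open>2 * s \<le> m\<close> by (intro power_tradeoff_le) auto
  also have "\<dots> \<le> exp (- 2 / \<alpha>\<^sup>2) ^ m"
    using assms(1,7,9) by (intro power_mono) (auto simp: field_simps)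
  also have "\<dots> \<le> exp (- (p * n)\<^sup>2) * (1 / 2) ^ s"
    using assms True by (intro exp_neg_inverse_square_power_le) (auto simp: mult.assoc)
  finally show ?thesis .
qed

lemma finite_all_edges: "finite (all_edges n)"
proof (rule finite_subset)
  show "all_edges n \<subseteq> Pow {1..n}"
    unfolding all_edges_def by auto
qed simp

lemma set_pmf_gnp_subset: "E \<in> set_pmf (gnp n p) \<Longrightarrow> E \<subseteq> all_edges n"
  unfolding gnp_def by auto

lemma prob_gnp_superset:
  assumes "T \<subseteq> all_edges n" "0 \<le> p" "p \<le> 1"
  shows "measure_pmf.prob (gnp n p) {E. T \<subseteq> E} = p ^ card T"
proof -
  let ?A = "all_edges n"
  have "measure_pmf.prob (gnp n p) {E. T \<subseteq> E} =
        measure_pmf.prob (Pi_pmf ?A False (\<lambda>_. bernoulli_pmf p))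
          (Pi ?A (\<lambda>e. if e \<in> T then {True} else UNIV))"
    unfolding gnp_def measure_map_pmf
    by (rule arg_cong[where f="measure_pmf.prob _"]) (use assms in \<open>auto simp: Pi_def split: if_splits\<close>)
  also have "\<dots> = (\<Prod>e\<in>?A. measure_pmf.prob (bernoulli_pmf p) (if e \<in> T then {True} else UNIV))"
    by (rule measure_Pi_pmf_Pi[OF finite_all_edges])
  also have "\<dots> = (\<Prod>e\<in>?A. if e \<in> T then p else 1)"
    by (rule prod.cong) (use assms in \<open>auto simp: measure_pmf_single\<close>)
  also have "\<dots> = p ^ card T"
    using finite_all_edges assms(1) by (simp add: prod.If_cases Int_absorb1)
  finally show ?thesis .
qed

lemma finite_edges_in_all_edges: "finite (edges_in (all_edges n) S)"
  unfolding edges_in_def using finite_all_edges by simp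

lemma card_edges_in_all_edges_le:
  assumes "finite S"
  shows "card (edges_in (all_edges n) S) \<le> card S ^ 2"
proof -
  have "edges_in (all_edges n) S \<subseteq> (\<lambda>(i, j). {i, j}) ` (S \<times> S)"
    unfolding edges_in_def all_edges_def by auto
  then have "card (edges_in (all_edges n) S) \<le> card ((\<lambda>(i, j). {i, j}) ` (S \<times> S))"
    using assms by (intro card_mono) auto
  also have "\<dots> \<le> card (S \<times> S)"
    by (rule card_image_le) (use assms in auto)
  finally show ?thesis
    by (simp add: card_cartesian_product power2_eq_square)
qed

lemma dense_edges_in_contains_subset:
  assumes "E \<subseteq> all_edges n" "m \<le> card (edges_in E S)"
  obtains T where "T \<subseteq> edges_in (all_edges n) S" "card T = m" "T \<subseteq> E"
proof -
  from assms(2) obtain T where T: "T \<subseteq> edges_in E S" "card T = m"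
    by (rule obtain_subset_with_card_n)
  with assms(1) show ?thesis
    by (intro that) (auto simp: edges_in_def)
qed

lemma prob_gnp_card_edges_in_ge:
  assumes "0 \<le> p" "p \<le> 1"
  shows "measure_pmf.prob (gnp n p) {E. m \<le> card (edges_in E S)}
           \<le> real (card (edges_in (all_edges n) S) choose m) * p ^ m"
proof -
  define Ts where "Ts = {T. T \<subseteq> edges_in (all_edges n) S \<and> card T = m}"
  have finite_Ts: "finite Ts"
    unfolding Ts_def
    by (rule finite_subset[of _ "Pow (edges_in (all_edges n) S)"]) (auto simp: finite_edges_in_all_edges)
  have "{E. m \<le> card (edges_in E S)} \<inter> set_pmf (gnp n p) \<subseteq> (\<Union>T\<in>Ts. {E. T \<subseteq> E})"
  proof
    fix E assume E: "E \<in> {E. m \<le> card (edges_in E S)} \<inter> set_pmf (gnp n p)"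
    have "E \<subseteq> all_edges n"
      using E by (intro set_pmf_gnp_subset[of _ n p]) simp
    moreover have "m \<le> card (edges_in E S)"
      using E by simp
    ultimately show "E \<in> (\<Union>T\<in>Ts. {E. T \<subseteq> E})"
      by (rule dense_edges_in_contains_subset) (auto simp: Ts_def)
  qed
  then have "measure_pmf.prob (gnp n p) ({E. m \<le> card (edges_in E S)} \<inter> set_pmf (gnp n p))
               \<le> measure_pmf.prob (gnp n p) (\<Union>T\<in>Ts. {E. T \<subseteq> E})"
    by (rule measure_pmf.finite_measure_mono) simp
  then have "measure_pmf.prob (gnp n p) {E. m \<le> card (edges_in E S)}
               \<le> measure_pmf.prob (gnp n p) (\<Union>T\<in>Ts. {E. T \<subseteq> E})"
    by (simp only: measure_Int_set_pmf)
  also have "\<dots> \<le> (\<Sum>T\<in>Ts. measure_pmf.prob (gnp n p) {E. T \<subseteq> E})"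
    by (rule measure_pmf.finite_measure_subadditive_finite[OF finite_Ts]) simp
  also have "\<dots> = (\<Sum>T\<in>Ts. p ^ m)"
  proof (rule sum.cong[OF refl])
    fix T assume "T \<in> Ts"
    then have "T \<subseteq> all_edges n" "card T = m"
      unfolding Ts_def edges_in_def by auto
    then show "measure_pmf.prob (gnp n p) {E. T \<subseteq> E} = p ^ m"
      using prob_gnp_superset assms by metis
  qed
  also have "\<dots> = real (card (edges_in (all_edges n) S) choose m) * p ^ m"
    using n_subsets[OF finite_edges_in_all_edges] by (simp add: Ts_def)
  finally show ?thesis .
qed

lemma prob_gnp_dense_set_of_card:
  assumes "0 \<le> p" "p \<le> 1"
  shows "measure_pmf.prob (gnp n p) {E. \<exists>S\<subseteq>{1..n}. card S = s \<and> m \<le> card (edges_in E S)}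
           \<le> real (n choose s) * real (s\<^sup>2 choose m) * p ^ m"
proof -
  define Ss where "Ss = {S. S \<subseteq> {1..n} \<and> card S = s}"
  have finite_Ss: "finite Ss"
    unfolding Ss_def by (rule finite_subset[of _ "Pow {1..n}"]) auto
  have "measure_pmf.prob (gnp n p) {E. \<exists>S\<subseteq>{1..n}. card S = s \<and> m \<le> card (edges_in E S)}
          = measure_pmf.prob (gnp n p) (\<Union>S\<in>Ss. {E. m \<le> card (edges_in E S)})"
    unfolding Ss_def by (rule arg_cong[where f = "measure_pmf.prob _"]) blast
  also have "\<dots> \<le> (\<Sum>S\<in>Ss. measure_pmf.prob (gnp n p) {E. m \<le> card (edges_in E S)})"
    by (rule measure_pmf.finite_measure_subadditive_finite[OF finite_Ss]) simp
  also have "\<dots> \<le> (\<Sum>S\<in>Ss. real (s\<^sup>2 choose m) * p ^ m)"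
  proof (rule sum_mono)
    fix S assume "S \<in> Ss"
    then have "finite S" "card S = s"
      unfolding Ss_def by (auto dest: finite_subset[OF _ finite_atLeastAtMost])
    then have "card (edges_in (all_edges n) S) choose m \<le> s\<^sup>2 choose m"
      by (intro binomial_right_mono) (metis card_edges_in_all_edges_le)
    then have "real (card (edges_in (all_edges n) S) choose m) * p ^ m \<le> real (s\<^sup>2 choose m) * p ^ m"
      using assms by (intro mult_right_mono) auto
    then show "measure_pmf.prob (gnp n p) {E. m \<le> card (edges_in E S)} \<le> real (s\<^sup>2 choose m) * p ^ m"
      using prob_gnp_card_edges_in_ge[OF assms] by (rule order_trans[rotated])
  qed
  also have "\<dots> = real (n choose s) * real (s\<^sup>2 choose m) * p ^ m"
    using n_subsets[of "{1..n}" s] by (simp add: Ss_def)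
  finally show ?thesis .
qed

lemma sum_binomial_dense_terms_le:
  fixes n :: nat and m :: "nat \<Rightarrow> nat" and \<alpha> c p :: real
  assumes "0 < \<alpha>" "\<alpha> \<le> p * n" "2 \<le> \<alpha> * p * n"
    and "\<And>s. \<alpha> * p * n * s \<le> m s" "\<And>s. 0 < m s"
    and "0 < c" "c \<le> 1" "exp 1 * c \<le> \<alpha> * exp (- 2 / \<alpha>\<^sup>2)"
  shows "(\<Sum>s\<in>{s. s \<le> n \<and> exp 1 * s \<le> c\<^sup>2 * n}. real (n choose s) * real (s\<^sup>2 choose m s) * p ^ m s)
           \<le> exp (- (p * n)\<^sup>2)"
    (is "(\<Sum>s\<in>?I. ?term s) \<le> _")
proof -
  have finite_I: "finite ?I"
    by (rule finite_subset[of _ "{..n}"]) auto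
  have "(\<Sum>s\<in>?I. ?term s) = (\<Sum>s\<in>?I - {0}. ?term s)"
    by (rule sum.mono_neutral_right[OF finite_I]) (use assms(5) in auto)
  also have "\<dots> \<le> (\<Sum>s\<in>?I - {0}. exp (- (p * n)\<^sup>2) * (1 / 2) ^ s)"
  proof (rule sum_mono)
    fix s assume "s \<in> ?I - {0}"
    then have "1 \<le> s" "exp 1 * s \<le> c\<^sup>2 * n"
      by auto
    then show "?term s \<le> exp (- (p * n)\<^sup>2) * (1 / 2) ^ s"
      by (rule binomial_dense_term_le[OF assms(1-3) _ _ assms(4) assms(6-8)])
  qed
  also have "\<dots> \<le> (\<Sum>s=1..n. exp (- (p * n)\<^sup>2) * (1 / 2) ^ s)"
    by (intro sum_mono2) auto
  also have "\<dots> = exp (- (p * n)\<^sup>2) * (1 - (1 / 2) ^ n)"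
    by (simp add: sum_distrib_left[symmetric] sum_gp)
  also have "\<dots> \<le> exp (- (p * n)\<^sup>2)"
    by (simp add: mult_left_le)
  finally show ?thesis .
qed

lemma prob_gnp_small_sets_sparse:
  fixes n :: nat and \<alpha> c p :: real
  assumes "0 < \<alpha>" "max \<alpha> (2 / \<alpha>) \<le> p * n" "p \<le> 1"
    and "0 < c" "c \<le> 1" "exp 1 * c \<le> \<alpha> * exp (- 2 / \<alpha>\<^sup>2)"
  shows "1 - exp (- (p * n)\<^sup>2) \<le> measure_pmf.prob (gnp n p)
           {E. \<forall>S. S \<subseteq> {1..n} \<and> real (card S) \<le> c\<^sup>2 / exp 1 * real n \<longrightarrow>
                 real (card (edges_in E S)) \<le> \<alpha> * p * real n * real (card S)}"
    (is "_ \<le> measure_pmf.prob _ ?G")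
proof -
  define m where "m s = nat \<lfloor>\<alpha> * p * n * s\<rfloor> + 1" for s :: nat
  define I where "I = {s. s \<le> n \<and> exp 1 * s \<le> c\<^sup>2 * n}"
  define A where "A s = {E. \<exists>S\<subseteq>{1..n}. card S = s \<and> m s \<le> card (edges_in E S)}" for s
  have pn: "\<alpha> \<le> p * n" "2 \<le> \<alpha> * p * n"
    using assms(1,2) by (simp_all add: pos_divide_le_eq algebra_simps)
  then have "0 < p * n"
    using assms(1) by linarith
  then have p: "0 \<le> p"
    by (auto simp: zero_less_mult_iff)
  have "- ?G \<subseteq> (\<Union>s\<in>I. A s)"
  proof
    fix E assume "E \<in> - ?G"
    then obtain S where S: "S \<subseteq> {1..n}" "card S \<le> c\<^sup>2 / exp 1 * n"
      and dense: "\<alpha> * p * n * card S < card (edges_in E S)"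
      by auto
    have "card S \<le> n"
      using card_mono[OF finite_atLeastAtMost S(1)] by simp
    with S(2) have "card S \<in> I"
      by (simp add: I_def field_simps)
    moreover have "m (card S) \<le> card (edges_in E S)"
      using dense p assms(1) by (simp add: m_def Suc_le_eq nat_less_iff floor_less_iff)
    ultimately show "E \<in> (\<Union>s\<in>I. A s)"
      using S(1) unfolding A_def by blast
  qed
  then have "measure_pmf.prob (gnp n p) (- ?G) \<le> measure_pmf.prob (gnp n p) (\<Union>s\<in>I. A s)"
    by (rule measure_pmf.finite_measure_mono) simp
  also have "\<dots> \<le> (\<Sum>s\<in>I. measure_pmf.prob (gnp n p) (A s))"
    by (rule measure_pmf.finite_measure_subadditive_finite) (auto simp: I_def)
  also have "\<dots> \<le> (\<Sum>s\<in>I. real (n choose s) * real (s\<^sup>2 choose m s) * p ^ m s)"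
    unfolding A_def using p assms(3) by (intro sum_mono prob_gnp_dense_set_of_card)
  also have "\<dots> \<le> exp (- (p * n)\<^sup>2)"
    unfolding I_def using assms(1,4-6) pn
    by (intro sum_binomial_dense_terms_le) (auto simp: m_def, linarith)
  finally have "measure_pmf.prob (gnp n p) (- ?G) \<le> exp (- (p * n)\<^sup>2)" .
  moreover have "measure_pmf.prob (gnp n p) (- ?G) = 1 - measure_pmf.prob (gnp n p) ?G"
    using measure_pmf.prob_compl[of ?G "gnp n p"] by (simp add: Compl_eq_Diff_UNIV)
  ultimately show ?thesis
    by linarith
qed

lemma sparsity_constant_exists:
  fixes \<alpha> :: real
  assumes "0 < \<alpha>"
  obtains c where "0 < c" "c \<le> 1" "exp 1 * c \<le> \<alpha> * exp (- 2 / \<alpha>\<^sup>2)"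
proof
  let ?c = "min 1 (\<alpha> * exp (- 2 / \<alpha>\<^sup>2) / exp 1)"
  show "0 < ?c" "?c \<le> 1"
    using assms by simp_all
  have "?c \<le> \<alpha> * exp (- 2 / \<alpha>\<^sup>2) / exp 1"
    by simp
  then show "exp 1 * ?c \<le> \<alpha> * exp (- 2 / \<alpha>\<^sup>2)"
    by (simp add: le_divide_eq mult.commute)
qed

theorem lemma4p14:
  fixes f :: "nat \<Rightarrow> real" and \<alpha> :: real
  assumes "\<And>n. f n \<ge> 0"
    and "filterlim f at_top sequentially"
    and "\<alpha> > 0"
  shows "\<exists>\<zeta>>0. \<exists>C>0. \<forall>\<^sub>F n in sequentially. \<forall>p::real.
           f n / real n \<le> p \<and> p \<le> 1 \<longrightarrow>
           measure_pmf.prob (gnp n p)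
             {E. \<forall>S. S \<subseteq> {1..n} \<and> real (card S) \<le> \<zeta> * real n \<longrightarrow>
                   real (card (edges_in E S)) \<le> \<alpha> * p * real n * real (card S)}
           \<ge> 1 - C * exp (- ((p * real n)^2))"
proof -
  obtain c where c: "0 < c" "c \<le> 1" "exp 1 * c \<le> \<alpha> * exp (- 2 / \<alpha>\<^sup>2)"
    using sparsity_constant_exists[OF assms(3)] .
  have "\<forall>\<^sub>F n in sequentially. max \<alpha> (2 / \<alpha>) \<le> f n"
    using assms(2) unfolding filterlim_at_top by blast
  then have "\<forall>\<^sub>F n in sequentially. \<forall>p. f n / real n \<le> p \<and> p \<le> 1 \<longrightarrow>
      measure_pmf.prob (gnp n p)
        {E. \<forall>S. S \<subseteq> {1..n} \<and> real (card S) \<le> c\<^sup>2 / exp 1 * real n \<longrightarrow>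
              real (card (edges_in E S)) \<le> \<alpha> * p * real n * real (card S)}
      \<ge> 1 - 1 * exp (- ((p * real n)^2))"
    using eventually_gt_at_top[of 0]
  proof eventually_elim
    case (elim n)
    have "max \<alpha> (2 / \<alpha>) \<le> p * n" if "f n / real n \<le> p" for p
    proof -
      have "f n \<le> p * n"
        using that elim(2) by (simp add: divide_le_eq)
      with elim(1) show ?thesis
        by (rule order_trans)
    qed
    then show ?case
      using prob_gnp_small_sets_sparse[OF assms(3) _ _ c] by simp
  qed
  then show ?thesis
  proof (intro exI conjI)
    show "0 < c\<^sup>2 / exp 1"
      using c(1) by simp
    show "0 < (1::real)"
      by simp
  qed
qed

end
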